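(* Let $\operatorname{char}(k)\ne2$, let $a_1,\dots,a_r\in X$ and $\mu=[a_r,\dots,a_1]_R$. Then: (i) for every $j$ with $2\le j<r$, $$\mu\sim(-1)^{|a_j||a_{j+1}\cdots a_r|}[a_j,a_r,\dots,a_{j+1},a_{j-1},\dots,a_1]_R;$$ (ii) for all $i,j$ with $2\le j<i\le r$, $$\mu\sim(-1)^{|a_i||a_j\cdots a_{i-1}|+|a_j||a_{j+1}\cdots a_{i-1}|}[a_r,\dots,a_{i+1},a_j,a_{i-1},\dots,a_{j+1},a_i,a_{j-1},\dots,a_1]_R.$$
   Context: A GDN superalgebra is a superalgebra $\mathcal A=\mathcal A_0\oplus\mathcal A_1$ over a field $k$ (product $\circ$, $\mathcal A_i\circ\mathcal A_j\subseteq\mathcal A_{i+j}$ mod 2, $|x|=i$ for nonzero $x\in\mathcal A_i$) satisfying for homogeneous $x,y,z$: $x\circ(y\circ z)-(x\circ y)\circ z=(-1)^{|x||y|}(y\circ(x\circ z)-(y\circ x)\circ z)$ and $(x\circ y)\circ z=(-1)^{|y||z|}(x\circ z)\circ y$. $X=X_0\sqcup X_1$ is well-ordered, elements of $X_i$ have parity $i$, and $\mathrm{GDN}_s(X)$ is the free GDN superalgebra on $X$. Terms over $X$: letters of $X$ and products $(\mu\circ\nu)$ of terms, regarded as elements of $\mathrm{GDN}_s(X)$; length $\ell$ is the number of letters. $[\mu_1,\dots,\mu_n]_R=(\mu_1\circ(\cdots\circ(\mu_{n-1}\circ\mu_n)\cdots))$. Root number: $r(a)=0$ ($a\in X$), $r((\mu\circ\nu))=r(\mu)+1$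 if $\nu\in X$, else $r(\mu)+r(\nu)$. For a string $a_1\cdots a_n$ of letters, $|a_1\cdots a_n|=|a_1|+\dots+|a_n|\pmod 2$, and the empty string has parity $0$. For terms $\mu,\nu$ with $r(\mu)=r(\nu)$, $\ell(\mu)=\ell(\nu)$ and nonzero $\alpha,\beta\in k$, write $\alpha\mu\sim\beta\nu$ if $\alpha\mu-\beta\nu=\sum_i\alpha_i\mu_i$ in $\mathrm{GDN}_s(X)$ for some $\alpha_i\in k$ and terms $\mu_i$ with $\ell(\mu_i)=\ell(\mu)$ and $r(\mu_i)>r(\mu)$. *)

theory Defs
  imports Main
begin

datatype 'x tm = Leaf 'x | Mul "'x tm" "'x tm"

text \<open>The parity function par a = True iff a is in X_1.\<close>
fun tpar :: "('x \<Rightarrow> bool) \<Rightarrow> 'x tm \<Rightarrow> bool" where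
  "tpar par (Leaf a) = par a"
| "tpar par (Mul u v) = (tpar par u \<noteq> tpar par v)"

fun len :: "'x tm \<Rightarrow> nat" where
  "len (Leaf a) = 1"
| "len (Mul u v) = len u + len v"

fun root :: "'x tm \<Rightarrow> nat" where
  "root (Leaf a) = 0"
| "root (Mul u (Leaf b)) = root u + 1"
| "root (Mul u (Mul v w)) = root u + root (Mul v w)"

fun rn :: "'x tm list \<Rightarrow> 'x tm" where
  "rn [t] = t"
| "rn (t # u # ts) = Mul t (rn (u # ts))"
| "rn [] = undefined"

definition spar :: "('x \<Rightarrow> bool) \<Rightarrow> 'x list \<Rightarrow> bool" where
  "spar par xs = odd (length (filter par xs))"

definition sgn1 :: "bool \<Rightarrow> 'k::ring_1" where
  "sgn1 b = (if b then -1 else 1)"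

text \<open>Elements of the free nonassociative algebra: finitely supported
  linear combinations of terms, represented as functions term => k.\<close>
definition single :: "'x tm \<Rightarrow> 'k::field \<Rightarrow> ('x tm \<Rightarrow> 'k)" where
  "single t c = (\<lambda>s. if s = t then c else 0)"

definition lmul :: "'x tm \<Rightarrow> ('x tm \<Rightarrow> 'k::field) \<Rightarrow> ('x tm \<Rightarrow> 'k)" where
  "lmul t f = (\<lambda>s. case s of Mul u v \<Rightarrow> (if u = t then f v else 0) | Leaf _ \<Rightarrow> 0)"

definition rmul :: "('x tm \<Rightarrow> 'k::field) \<Rightarrow> 'x tm \<Rightarrow> ('x tm \<Rightarrow> 'k)" where
  "rmul f t = (\<lambda>s. case s of Mul u v \<Rightarrow> (if v = t then f u else 0) | Leaf _ \<Rightarrow> 0)"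

text \<open>The defining GDN super-identities, instantiated at terms (terms are homogeneous).\<close>
definition rel1 :: "('x \<Rightarrow> bool) \<Rightarrow> 'x tm \<Rightarrow> 'x tm \<Rightarrow> 'x tm \<Rightarrow> ('x tm \<Rightarrow> 'k::field)" where
  "rel1 par x y z = (\<lambda>s.
      single (Mul x (Mul y z)) 1 s - single (Mul (Mul x y) z) 1 s
    - sgn1 (tpar par x \<and> tpar par y) * (single (Mul y (Mul x z)) 1 s - single (Mul (Mul y x) z) 1 s))"

definition rel2 :: "('x \<Rightarrow> bool) \<Rightarrow> 'x tm \<Rightarrow> 'x tm \<Rightarrow> 'x tm \<Rightarrow> ('x tm \<Rightarrow> 'k::field)" where
  "rel2 par x y z = (\<lambda>s.
      single (Mul (Mul x y) z) 1 s - sgn1 (tpar par y \<and> tpar par z) * single (Mul (Mul x z) y) 1 s)"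

text \<open>The ideal of the free nonassociative superalgebra generated by the GDN identities;
  GDN_s(X) is the quotient by it.\<close>
inductive_set gdn_ideal :: "('x \<Rightarrow> bool) \<Rightarrow> ('x tm \<Rightarrow> 'k::field) set" for par where
  gen1: "rel1 par x y z \<in> gdn_ideal par"
| gen2: "rel2 par x y z \<in> gdn_ideal par"
| zero: "(\<lambda>_. 0) \<in> gdn_ideal par"
| add: "f \<in> gdn_ideal par \<Longrightarrow> g \<in> gdn_ideal par \<Longrightarrow> (\<lambda>s. f s + g s) \<in> gdn_ideal par"
| smul: "f \<in> gdn_ideal par \<Longrightarrow> (\<lambda>s. c * f s) \<in> gdn_ideal par"
| lm: "f \<in> gdn_ideal par \<Longrightarrow> lmul t f \<in> gdn_ideal par"
| rm: "f \<in> gdn_ideal par \<Longrightarrow> rmul f t \<in> gdn_ideal par"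

definition sim :: "('x \<Rightarrow> bool) \<Rightarrow> 'k::field \<Rightarrow> 'x tm \<Rightarrow> 'k \<Rightarrow> 'x tm \<Rightarrow> bool" where
  "sim par \<alpha> \<mu> \<beta> \<nu> \<longleftrightarrow>
     root \<mu> = root \<nu> \<and> len \<mu> = len \<nu> \<and> \<alpha> \<noteq> 0 \<and> \<beta> \<noteq> 0 \<and>
     (\<exists>g :: 'x tm \<Rightarrow> 'k. finite {t. g t \<noteq> 0} \<and>
        (\<forall>t. g t \<noteq> 0 \<longrightarrow> len t = len \<mu> \<and> root t > root \<mu>) \<and>
        (\<lambda>s. single \<mu> \<alpha> s - single \<nu> \<beta> s - g s) \<in> gdn_ideal par)"

end

theory Submission
  imports Defs
begin

text \<open>For letters x, y and a term z the first GDN identity reads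
  x(yz) - (-1)^{|x||y|} y(xz) = (xy)z - (-1)^{|x||y|} (yx)z.
  When z is itself a product, both terms on the right have root number at least 2,
  whereas every right-normed word of letters has root number 1. So modulo terms of
  higher root number two adjacent letters of a right-normed word may be exchanged,
  at the cost of a sign, provided they are not the last two letters; the claims follow
  by composing such exchanges.\<close>

definition rword :: "'x list \<Rightarrow> 'x tm" where
  "rword xs = rn (map Leaf xs)"

lemma rword_Cons: "ys \<noteq> [] \<Longrightarrow> rword (c # ys) = Mul (Leaf c) (rword ys)"
  by (cases ys) (auto simp: rword_def)

lemma rword_singleton: "rword [c] = Leaf c"
  by (simp add: rword_def)

lemma len_rword: "xs \<noteq> [] \<Longrightarrow> len (rword xs) = length xs"
proof (induction xs)
  case (Cons c ys)
  then show ?case by (cases "ys = []") (auto simp: rword_singleton rword_Cons)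
qed simp

lemma root_Mul_rword: "ys \<noteq> [] \<Longrightarrow> root (Mul u (rword ys)) = root u + 1"
proof (induction ys arbitrary: u)
  case (Cons c ys)
  then show ?case by (cases "ys = []") (auto simp: rword_singleton rword_Cons)
qed simp

lemma root_rword:
  assumes "2 \<le> length xs"
  shows "root (rword xs) = 1"
proof -
  obtain c ys where "xs = c # ys" "ys \<noteq> []"
    using assms by (cases xs) (auto simp: Suc_le_eq)
  then show ?thesis
    by (simp add: rword_Cons root_Mul_rword)
qed

lemma spar_Cons: "spar par (c # xs) = (par c \<noteq> spar par xs)"
  by (simp add: spar_def)

lemma spar_rev: "spar par (rev xs) = spar par xs"
  by (simp add: spar_def rev_filter[symmetric])

lemma sgn1_nonzero: "sgn1 b \<noteq> (0 :: 'k::field)"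
  by (simp add: sgn1_def)

lemma rev_upt_split:
  assumes "m \<le> j" "j < n"
  shows "rev [m..<n] = rev [j + 1..<n] @ j # rev [m..<j]"
proof -
  have "[m..<n] = [m..<j] @ [j..<n]"
    using assms upt_add_eq_append[of m j "n - j"] by simp
  also have "[j..<n] = j # [j + 1..<n]"
    using assms(2) by (simp add: upt_conv_Cons)
  finally show ?thesis
    by simp
qed

definition negligible :: "('x \<Rightarrow> bool) \<Rightarrow> nat \<Rightarrow> ('x tm \<Rightarrow> 'k::field) \<Rightarrow> bool" where
  "negligible par L f \<longleftrightarrow> (\<exists>g. finite {t. g t \<noteq> 0} \<and> (\<forall>t. g t \<noteq> 0 \<longrightarrow> len t = L \<and> 1 < root t)
      \<and> (\<lambda>s. f s - g s) \<in> gdn_ideal par)"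

lemma negligible_add:
  assumes "negligible par L f" "negligible par L h"
  shows "negligible par L (\<lambda>s. f s + h s)"
proof -
  obtain g1 where g1: "finite {t. g1 t \<noteq> 0}" "\<forall>t. g1 t \<noteq> 0 \<longrightarrow> len t = L \<and> 1 < root t"
      "(\<lambda>s. f s - g1 s) \<in> gdn_ideal par"
    using assms(1) unfolding negligible_def by blast
  obtain g2 where g2: "finite {t. g2 t \<noteq> 0}" "\<forall>t. g2 t \<noteq> 0 \<longrightarrow> len t = L \<and> 1 < root t"
      "(\<lambda>s. h s - g2 s) \<in> gdn_ideal par"
    using assms(2) unfolding negligible_def by blast
  have "{t. g1 t + g2 t \<noteq> 0} \<subseteq> {t. g1 t \<noteq> 0} \<union> {t. g2 t \<noteq> 0}"
    by auto
  then have "finite {t. g1 t + g2 t \<noteq> 0}"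
    using g1(1) g2(1) by (meson finite_UnI finite_subset)
  moreover have "\<forall>t. g1 t + g2 t \<noteq> 0 \<longrightarrow> len t = L \<and> 1 < root t"
    using g1(2) g2(2) by force
  moreover have "(\<lambda>s. (f s + h s) - (g1 s + g2 s)) \<in> gdn_ideal par"
    using gdn_ideal.add[OF g1(3) g2(3)] by (simp add: algebra_simps)
  ultimately show ?thesis
    unfolding negligible_def by (intro exI[of _ "\<lambda>s. g1 s + g2 s"]) simp
qed

lemma negligible_smul:
  assumes "negligible par L f"
  shows "negligible par L (\<lambda>s. c * f s)"
proof -
  obtain g where g: "finite {t. g t \<noteq> 0}" "\<forall>t. g t \<noteq> 0 \<longrightarrow> len t = L \<and> 1 < root t"
      "(\<lambda>s. f s - g s) \<in> gdn_ideal par"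
    using assms unfolding negligible_def by blast
  have "finite {t. c * g t \<noteq> 0}"
    using g(1) by (rule rev_finite_subset) auto
  moreover have "\<forall>t. c * g t \<noteq> 0 \<longrightarrow> len t = L \<and> 1 < root t"
    using g(2) by force
  moreover have "(\<lambda>s. c * f s - c * g s) \<in> gdn_ideal par"
    using gdn_ideal.smul[OF g(3), of c] by (simp add: algebra_simps)
  ultimately show ?thesis
    unfolding negligible_def by (intro exI[of _ "\<lambda>s. c * g s"]) simp
qed

lemma lmul_diff: "lmul t (\<lambda>s. f s - g s) = (\<lambda>s. lmul t f s - lmul t g s)"
  by (auto simp: lmul_def split: tm.split)

lemma lmul_single: "lmul t (single u c) = single (Mul t u) c"
  by (auto simp: lmul_def single_def split: tm.split)

lemma lmul_smul_single: "lmul t (\<lambda>s. c * single u 1 s) = (\<lambda>s. c * single (Mul t u) 1 s)"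
  by (auto simp: lmul_def single_def split: tm.split)

lemma negligible_lmul_Leaf:
  assumes "negligible par L f"
  shows "negligible par (Suc L) (lmul (Leaf a) f)"
proof -
  obtain g where g: "finite {t. g t \<noteq> 0}" "\<forall>t. g t \<noteq> 0 \<longrightarrow> len t = L \<and> 1 < root t"
      "(\<lambda>s. f s - g s) \<in> gdn_ideal par"
    using assms unfolding negligible_def by blast
  have support: "\<exists>v. t = Mul (Leaf a) v \<and> g v \<noteq> 0" if "lmul (Leaf a) g t \<noteq> 0" for t
    using that by (cases t) (auto simp: lmul_def split: if_splits)
  have "{t. lmul (Leaf a) g t \<noteq> 0} \<subseteq> Mul (Leaf a) ` {t. g t \<noteq> 0}"
    using support by blast
  then have "finite {t. lmul (Leaf a) g t \<noteq> 0}"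
    using g(1) finite_subset by blast
  moreover have "len t = Suc L \<and> 1 < root t" if nonzero: "lmul (Leaf a) g t \<noteq> 0" for t
  proof -
    obtain v where t: "t = Mul (Leaf a) v" and "g v \<noteq> 0"
      using support nonzero by blast
    then have v: "len v = L" "1 < root v"
      using g(2) by auto
    then obtain v1 v2 where "v = Mul v1 v2"
      by (cases v) auto
    then show ?thesis
      using t v by simp
  qed
  moreover have "(\<lambda>s. lmul (Leaf a) f s - lmul (Leaf a) g s) \<in> gdn_ideal par"
    using gdn_ideal.lm[OF g(3), of "Leaf a"] by (simp add: lmul_diff)
  ultimately show ?thesis
    unfolding negligible_def by (intro exI[of _ "lmul (Leaf a) g"]) blast
qed

text \<open>The relation u \<sim> c v of the paper, with the length L of the higher-root terms
  carried as a parameter.\<close>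
definition rsim :: "('x \<Rightarrow> bool) \<Rightarrow> nat \<Rightarrow> 'k::field \<Rightarrow> 'x tm \<Rightarrow> 'x tm \<Rightarrow> bool" where
  "rsim par L c u v \<longleftrightarrow> negligible par L (\<lambda>s. single u 1 s - c * single v 1 s)"

lemma rsim_refl: "rsim par L 1 u u"
  unfolding rsim_def negligible_def by (rule exI[of _ "\<lambda>_. 0"]) (simp add: gdn_ideal.zero)

lemma rsim_trans:
  assumes "rsim par L c1 u v" "rsim par L c2 v w"
  shows "rsim par L (c1 * c2) u w"
proof -
  have "negligible par L (\<lambda>s. (single u 1 s - c1 * single v 1 s) + c1 * (single v 1 s - c2 * single w 1 s))"
    using negligible_add[OF assms(1)[unfolded rsim_def] negligible_smul[OF assms(2)[unfolded rsim_def]]] .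
  also have "(\<lambda>s. (single u 1 s - c1 * single v 1 s) + c1 * (single v 1 s - c2 * single w 1 s))
      = (\<lambda>s. single u 1 s - (c1 * c2) * single w 1 s)"
    by (simp add: algebra_simps)
  finally show ?thesis
    unfolding rsim_def .
qed

lemma rsim_sym_sgn1:
  assumes "rsim par L (sgn1 b :: 'k::field) u v"
  shows "rsim par L (sgn1 b :: 'k) v u"
proof -
  have "negligible par L (\<lambda>s. - sgn1 b * (single u 1 s - sgn1 b * single v (1::'k) s))"
    using negligible_smul[OF assms[unfolded rsim_def], of "- sgn1 b"] .
  also have "(\<lambda>s. - sgn1 b * (single u 1 s - sgn1 b * single v (1::'k) s))
      = (\<lambda>s. single v 1 s - sgn1 b * single u 1 s)"
    by (rule ext) (simp add: sgn1_def algebra_simps)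
  finally show ?thesis
    unfolding rsim_def .
qed

lemma rsim_Cons:
  assumes "rsim par L c (rword xs) (rword ys)" "xs \<noteq> []" "ys \<noteq> []"
  shows "rsim par (Suc L) c (rword (a # xs)) (rword (a # ys))"
proof -
  have "negligible par (Suc L) (lmul (Leaf a) (\<lambda>s. single (rword xs) 1 s - c * single (rword ys) 1 s))"
    using negligible_lmul_Leaf[OF assms(1)[unfolded rsim_def]] .
  then show ?thesis
    using assms(2,3) unfolding rsim_def by (simp add: lmul_diff lmul_single lmul_smul_single rword_Cons)
qed

lemma rsim_swap_front:
  fixes par :: "'x \<Rightarrow> bool"
  assumes "q \<noteq> []"
  shows "rsim par (length q + 2) (sgn1 (par x \<and> par y) :: 'k::field)
    (rword (x # y # q)) (rword (y # x # q))"
proof -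
  let ?z = "rword q" and ?c = "sgn1 (par x \<and> par y) :: 'k"
  define g where "g s = single (Mul (Mul (Leaf x) (Leaf y)) ?z) 1 s
      - ?c * single (Mul (Mul (Leaf y) (Leaf x)) ?z) 1 s" for s
  have "g t = 0" if "t \<noteq> Mul (Mul (Leaf x) (Leaf y)) ?z" "t \<noteq> Mul (Mul (Leaf y) (Leaf x)) ?z" for t
    using that by (simp add: g_def single_def)
  then have support: "{t. g t \<noteq> 0} \<subseteq> {Mul (Mul (Leaf x) (Leaf y)) ?z, Mul (Mul (Leaf y) (Leaf x)) ?z}"
    by blast
  then have "finite {t. g t \<noteq> 0}"
    by (rule finite_subset) simp
  moreover have "\<forall>t. g t \<noteq> 0 \<longrightarrow> len t = length q + 2 \<and> 1 < root t"
    using support assms by (auto simp: root_Mul_rword len_rword)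
  moreover have "(\<lambda>s. single (rword (x # y # q)) 1 s - ?c * single (rword (y # x # q)) 1 s - g s)
      = rel1 par (Leaf x) (Leaf y) ?z"
  proof -
    have "rword (x # y # q) = Mul (Leaf x) (Mul (Leaf y) ?z)" "rword (y # x # q) = Mul (Leaf y) (Mul (Leaf x) ?z)"
      using assms by (simp_all add: rword_Cons)
    then show ?thesis
      unfolding g_def rel1_def tpar.simps by (intro ext) (simp add: algebra_simps)
  qed
  ultimately show ?thesis
    unfolding rsim_def negligible_def using gdn_ideal.gen1[of par "Leaf x" "Leaf y" ?z]
    by (intro exI[of _ g]) simp
qed

lemma rsim_swap:
  fixes par :: "'x \<Rightarrow> bool"
  assumes "q \<noteq> []"
  shows "rsim par (length p + length q + 2) (sgn1 (par x \<and> par y) :: 'k::field)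
    (rword (p @ x # y # q)) (rword (p @ y # x # q))"
proof (induction p)
  case Nil
  then show ?case
    using rsim_swap_front[OF assms] by simp
next
  case (Cons c p)
  then show ?case
    using rsim_Cons[OF Cons.IH, of c] by simp
qed

lemma rsim_move_left:
  fixes par :: "'x \<Rightarrow> bool"
  assumes "q \<noteq> []"
  shows "rsim par (length p + length b + length q + 1) (sgn1 (par x \<and> spar par b) :: 'k::field)
    (rword (p @ b @ x # q)) (rword (p @ x # b @ q))"
proof (induction b arbitrary: p)
  case Nil
  then show ?case
    using rsim_refl by (simp add: sgn1_def spar_def)
next
  case (Cons c b)
  have "rsim par (length p + length (c # b) + length q + 1) (sgn1 (par x \<and> spar par b) :: 'k)
      (rword (p @ (c # b) @ x # q)) (rword (p @ c # x # b @ q))"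
    using Cons.IH[of "p @ [c]"] by simp
  moreover have "rsim par (length p + length (c # b) + length q + 1) (sgn1 (par c \<and> par x) :: 'k)
      (rword (p @ c # x # b @ q)) (rword (p @ x # (c # b) @ q))"
    using rsim_swap[where q = "b @ q" and p = p and x = c and y = x] assms by (simp add: add.assoc)
  ultimately have "rsim par (length p + length (c # b) + length q + 1)
      (sgn1 (par x \<and> spar par b) * sgn1 (par c \<and> par x) :: 'k)
      (rword (p @ (c # b) @ x # q)) (rword (p @ x # (c # b) @ q))"
    by (rule rsim_trans)
  moreover have "sgn1 (par x \<and> spar par b) * sgn1 (par c \<and> par x)
      = (sgn1 (par x \<and> spar par (c # b)) :: 'k)"
    by (auto simp: sgn1_def spar_Cons)
  ultimately show ?case
    by simp
qed

lemma rsim_exchange: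
  fixes par :: "'x \<Rightarrow> bool"
  assumes "q \<noteq> []"
  shows "rsim par (length p + length b + length q + 2)
    (sgn1 ((par y \<and> spar par (x # b)) \<noteq> (par x \<and> spar par b)) :: 'k::field)
    (rword (p @ y # b @ x # q)) (rword (p @ x # b @ y # q))"
proof -
  have "rsim par (length p + length b + length q + 2) (sgn1 (par x \<and> spar par (y # b)) :: 'k)
      (rword (p @ y # b @ x # q)) (rword (p @ x # y # b @ q))"
    using rsim_move_left[OF assms, where p = p and b = "y # b" and x = x] by simp
  moreover have "rsim par (length p + length b + length q + 2) (sgn1 (par y \<and> spar par b) :: 'k)
      (rword (p @ x # y # b @ q)) (rword (p @ x # b @ y # q))"
    using rsim_sym_sgn1[OF rsim_move_left[OF assms, where p = "p @ [x]" and b = b and x = y]]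
    by simp
  ultimately have "rsim par (length p + length b + length q + 2)
      (sgn1 (par x \<and> spar par (y # b)) * sgn1 (par y \<and> spar par b) :: 'k)
      (rword (p @ y # b @ x # q)) (rword (p @ x # b @ y # q))"
    by (rule rsim_trans)
  moreover have "sgn1 (par x \<and> spar par (y # b)) * sgn1 (par y \<and> spar par b)
      = (sgn1 ((par y \<and> spar par (x # b)) \<noteq> (par x \<and> spar par b)) :: 'k)"
    by (auto simp: sgn1_def spar_Cons)
  ultimately show ?thesis
    by simp
qed

lemma sim_of_rsim:
  assumes "rsim par (length xs) c (rword xs) (rword ys)"
    and "c \<noteq> 0" "2 \<le> length xs" "length ys = length xs"
  shows "sim par (1::'k::field) (rword xs) c (rword ys)"
proof -
  have "single (rword ys) c = (\<lambda>s. c * single (rword ys) 1 s)"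
    by (auto simp: single_def)
  moreover have "xs \<noteq> []" "ys \<noteq> []"
    using assms(3,4) by auto
  ultimately show ?thesis
    using assms unfolding sim_def rsim_def negligible_def by (simp add: root_rword len_rword)
qed

lemma sim_move_to_front:
  assumes "q \<noteq> []"
  shows "sim par (1::'k::field) (rword (b @ x # q)) (sgn1 (par x \<and> spar par b)) (rword (x # b @ q))"
  using assms rsim_move_left[OF assms, where p = "[]" and b = b and x = x and par = par]
  by (intro sim_of_rsim) (simp_all add: sgn1_nonzero Suc_le_eq)

lemma sim_exchange:
  assumes "q \<noteq> []"
  shows "sim par (1::'k::field) (rword (p @ y # b @ x # q))
    (sgn1 ((par y \<and> spar par (x # b)) \<noteq> (par x \<and> spar par b))) (rword (p @ x # b @ y # q))"
  using assms rsim_exchange[OF assms, where p = p and y = y and b = b and x = x and par = par]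
  by (intro sim_of_rsim) (simp_all add: sgn1_nonzero Suc_le_eq add.assoc)

lemma rn_map_Leaf: "rn (map (\<lambda>l. Leaf (a l)) ls) = rword (map a ls)"
  by (simp add: rword_def comp_def)

lemma spar_map_rev: "spar par (map a (rev ls)) = spar par (map a ls)"
  by (simp add: rev_map[symmetric] spar_rev)

theorem lemma2p8:
  fixes par :: "'x \<Rightarrow> bool" and a :: "nat \<Rightarrow> 'x" and r :: nat
  assumes char: "(2::'k::field) \<noteq> 0"
  defines "\<mu> \<equiv> rn (map (\<lambda>l. Leaf (a l)) (rev [1..<r+1]))"
  shows "(\<forall>j. 2 \<le> j \<and> j < r \<longrightarrow>
           sim par (1::'k) \<mu>
             (sgn1 (par (a j) \<and> spar par (map a [j+1..<r+1])))
             (rn (map (\<lambda>l. Leaf (a l)) (j # rev [j+1..<r+1] @ rev [1..<j]))))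
       \<and> (\<forall>i j. 2 \<le> j \<and> j < i \<and> i \<le> r \<longrightarrow>
           sim par (1::'k) \<mu>
             (sgn1 ((par (a i) \<and> spar par (map a [j..<i])) \<noteq>
                    (par (a j) \<and> spar par (map a [j+1..<i]))))
             (rn (map (\<lambda>l. Leaf (a l))
                (rev [i+1..<r+1] @ [j] @ rev [j+1..<i] @ [i] @ rev [1..<j]))))"
proof (intro conjI allI impI)
  fix j assume j: "2 \<le> j \<and> j < r"
  have "rev [1..<r+1] = rev [j+1..<r+1] @ j # rev [1..<j]"
    using j by (intro rev_upt_split) auto
  then have "\<mu> = rword (map a (rev [j+1..<r+1]) @ a j # map a (rev [1..<j]))"
    unfolding \<mu>_def rn_map_Leaf by (simp del: upt_Suc)
  then show "sim par (1::'k) \<mu> (sgn1 (par (a j) \<and> spar par (map a [j+1..<r+1])))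
      (rn (map (\<lambda>l. Leaf (a l)) (j # rev [j+1..<r+1] @ rev [1..<j])))"
    unfolding rn_map_Leaf
    using sim_move_to_front[of "map a (rev [1..<j])" par "map a (rev [j+1..<r+1])" "a j"] j
    by (simp add: spar_map_rev del: upt_Suc)
next
  fix i j assume ij: "2 \<le> j \<and> j < i \<and> i \<le> r"
  have "rev [1..<r+1] = rev [i+1..<r+1] @ i # rev [1..<i]"
    using ij by (intro rev_upt_split) auto
  also have "rev [1..<i] = rev [j+1..<i] @ j # rev [1..<j]"
    using ij by (intro rev_upt_split) auto
  finally have "\<mu> = rword (map a (rev [i+1..<r+1]) @ a i # map a (rev [j+1..<i]) @ a j # map a (rev [1..<j]))"
    unfolding \<mu>_def rn_map_Leaf by (simp del: upt_Suc)
  moreover have "[j..<i] = j # [j+1..<i]"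
    using ij by (simp add: upt_conv_Cons)
  ultimately show "sim par (1::'k) \<mu>
      (sgn1 ((par (a i) \<and> spar par (map a [j..<i])) \<noteq> (par (a j) \<and> spar par (map a [j+1..<i]))))
      (rn (map (\<lambda>l. Leaf (a l)) (rev [i+1..<r+1] @ [j] @ rev [j+1..<i] @ [i] @ rev [1..<j])))"
    unfolding rn_map_Leaf
    using sim_exchange[of "map a (rev [1..<j])" par "map a (rev [i+1..<r+1])" "a i"
        "map a (rev [j+1..<i])" "a j"] ij
    by (simp add: spar_Cons spar_map_rev del: upt_Suc)
qed

end
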